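(* For all words $z\in\{0,1\}^*$ and all integers $k\geq 1$, \[V([z10^k1]_F)=\begin{cases} V([z10^{k+1}]_F), & \text{if } k \text{ is odd};\\ V([z10^k]_F)+V([z(01)^{k/2}]_F), & \text{if } k \text{ is even}.\end{cases}\]
   Context: Fibonacci numbers: $F_0=0$, $F_1=1$, $F_{m+2}=F_{m+1}+F_m$. For a word $k_m\cdots k_0$ of nonnegative integer digits, $[k_m\cdots k_0]_F=\sum_{i=0}^m k_iF_{i+2}$; $u^j$ denotes $j$ concatenated copies of $u$. Standard Fibonacci words: $f_{-1}=b$, $f_0=a$, $f_{m+1}=f_mf_{m-1}$. The Fibonacci word ${\bf f}=\lim f_m$, with prefix of length $j$ denoted ${\bf f}(0..j]$. $V(N)$ is the number of factorizations of ${\bf f}(0..N]$ as $f_m^{k_m}\cdots f_0^{k_0}$ with all $k_i\geq 0$ (into standard words $f_i$, $i\geq0$, in non-strictly decreasing order of index), counted up to leading zero exponents; $V(0)=1$. *)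

theory Defs
  imports "HOL-Number_Theory.Fib"
begin

datatype letter = a | b

text \<open>Standard Fibonacci words: fw m = f_m for m \<ge> 0 (with f_{-1} = b, f_0 = a,
  so f_1 = f_0 f_{-1} = ab and f_{m+2} = f_{m+1} f_m).\<close>
fun fw :: "nat \<Rightarrow> letter list" where
  "fw 0 = [a]"
| "fw (Suc 0) = [a, b]"
| "fw (Suc (Suc m)) = fw (Suc m) @ fw m"

text \<open>Prefix of length N of the infinite Fibonacci word (fw N has length F_{N+2} > N,
  and each fw m is a prefix of fw (m+1)).\<close>
definition fib_prefix :: "nat \<Rightarrow> letter list" where
  "fib_prefix N = take N (fw N)"

definition fact_word :: "(nat \<Rightarrow> nat) \<Rightarrow> nat \<Rightarrow> letter list" where
  "fact_word k m = concat (map (\<lambda>i. concat (replicate (k i) (fw i))) (rev [0..<m]))"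

text \<open>V(N): number of factorizations of the prefix of length N, counted as finitely
  supported exponent sequences (i.e. up to leading zero exponents).\<close>
definition V :: "nat \<Rightarrow> nat" where
  "V N = card {k :: nat \<Rightarrow> nat. \<exists>m. (\<forall>i\<ge>m. k i = 0) \<and> fact_word k m = fib_prefix N}"

text \<open>Fibonacci value of a digit word k_m ... k_0 (most significant digit first):
  sum of k_i F_{i+2}.\<close>
definition fibval :: "nat list \<Rightarrow> nat" where
  "fibval ds = (\<Sum>i<length ds. rev ds ! i * fib (i + 2))"

end

theory Submission
  imports Defs "HOL-Library.Sublist"
begin

(*
  The morphism sigma: a -> ab, b -> a maps f_m to f_(m+1), so a factorization
  f_m^(k_m) ... f_0^(k_0) of a word w is sigma of a factorization of some word u, followed
  by a^(k_0). Splitting on whether k_0 = 0, and using that sigma is injective and that its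
  image never ends in bb, the number N of factorizations satisfies
    N(sigma(w a)) = N(w a),   N(sigma(w b)) = N(w b) + N(sigma(w)),   N(w b b) = 0.
  The digit word d_m ... d_0 over {0,1} corresponds to f_m^(d_m) ... f_0^(d_0), built from
  the empty word by the steps w -> sigma(w) a^(d_i); this is the prefix of the Fibonacci
  word of length [d]_F, so V([d]_F) is its N. If R is the word of z(01)^m, then the word
  of z10^(2m) is sigma(R) a, and the recurrences applied to these words give both cases.
*)

fun fib_morph :: "letter list \<Rightarrow> letter list" where
  "fib_morph [] = []"
| "fib_morph (a # w) = a # b # fib_morph w"
| "fib_morph (b # w) = a # fib_morph w"

lemma fib_morph_append [simp]: "fib_morph (u @ v) = fib_morph u @ fib_morph v"
  by (induction u rule: fib_morph.induct) auto

fun fib_unmorph :: "letter list \<Rightarrow> letter list" where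
  "fib_unmorph (a # b # w) = a # fib_unmorph w"
| "fib_unmorph (a # w) = b # fib_unmorph w"
| "fib_unmorph _ = []"

lemma fib_unmorph_fib_morph: "fib_unmorph (fib_morph w) = w"
proof (induction w rule: fib_morph.induct)
  case (3 w)
  then show ?case by (cases w rule: fib_morph.cases) auto
qed auto

lemma inj_fib_morph: "inj fib_morph"
  by (rule inj_on_inverseI[where g = fib_unmorph]) (rule fib_unmorph_fib_morph)

lemma fib_morph_append_Cons_a: "\<exists>t'. fib_morph v @ a # t = a # t'"
  by (cases v rule: fib_morph.cases) auto

lemma snoc_b_b_notin_range_fib_morph: "u @ [b, b] \<notin> range fib_morph"
proof
  assume "u @ [b, b] \<in> range fib_morph"
  then obtain w where w: "fib_morph w = u @ [b, b]"
    by auto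
  then show False
  proof (cases w rule: rev_cases)
    case (snoc w' x)
    then show False using w by (cases x) auto
  qed simp
qed

lemma fw_Suc: "fw (Suc m) = fib_morph (fw m)"
  by (induction m rule: fw.induct)
    (auto simp del: fib_morph_append simp: fib_morph_append[symmetric])

lemma length_fw: "length (fw m) = fib (m + 2)"
  by (induction m rule: fw.induct) (auto simp: numeral_2_eq_2)

lemma length_fw_gt: "m < length (fw m)"
  by (induction m rule: fw.induct) auto

lemma fw_Cons_a: "\<exists>t. fw m = a # t"
  by (induction m rule: fw.induct) auto

lemma prefix_fw_Suc: "prefix (fw m) (fw (Suc m))"
  by (cases m) (auto simp: prefix_def)

lemma prefix_fw_mono: "m \<le> n \<Longrightarrow> prefix (fw m) (fw n)"
  by (induction n rule: dec_induct) (auto intro: prefix_order.trans prefix_fw_Suc)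

lemma fib_prefix_eq: "prefix w (fw m) \<Longrightarrow> fib_prefix (length w) = w"
proof -
  assume "prefix w (fw m)"
  define n where "n = max (length w) m"
  have "prefix w (fw n)" "prefix (fw (length w)) (fw n)"
    using \<open>prefix w (fw m)\<close> prefix_fw_mono
    by (auto simp: n_def intro: prefix_order.trans)
  moreover have "length w \<le> length (fw (length w))"
    using length_fw_gt less_imp_le by blast
  ultimately show ?thesis
    unfolding fib_prefix_def prefix_def by (metis append_eq_conv_conj take_all_iff take_append)
qed

definition factorizations :: "letter list \<Rightarrow> (nat \<Rightarrow> nat) set" where
  "factorizations w = {k. \<exists>m. (\<forall>i\<ge>m. k i = 0) \<and> fact_word k m = w}"

definition num_factorizations :: "letter list \<Rightarrow> nat" where
  "num_factorizations w = card (factorizations w)"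

lemma V_eq_num_factorizations: "V N = num_factorizations (fib_prefix N)"
  by (simp add: V_def num_factorizations_def factorizations_def)

lemma fact_word_Suc:
  "fact_word k (Suc m) = fib_morph (fact_word (k \<circ> Suc) m) @ replicate (k 0) a"
proof -
  have "rev [0..<Suc m] = map Suc (rev [0..<m]) @ [0]"
    by (simp add: upt_conv_Cons map_Suc_upt[of 0 m, symmetric] rev_map del: upt_Suc)
  moreover have "fib_morph (concat ws) = concat (map fib_morph ws)" for ws
    by (induction ws) auto
  moreover have "concat (replicate n [a]) = replicate n a" for n
    by (induction n) auto
  ultimately show ?thesis
    by (simp add: fact_word_def o_def fw_Suc map_replicate)
qed

lemma length_fact_word: "length (fact_word k m) = (\<Sum>i<m. k i * length (fw i))"
  by (induction m) (simp_all add: fact_word_def length_concat sum_list_replicate)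

lemma factorizations_iff:
  "k \<in> factorizations w \<longleftrightarrow>
    (\<exists>u. k \<circ> Suc \<in> factorizations u \<and> w = fib_morph u @ replicate (k 0) a)"
proof
  assume "k \<in> factorizations w"
  then obtain m where m: "\<forall>i\<ge>m. k i = 0" "fact_word k m = w"
    by (auto simp: factorizations_def)
  have "k \<circ> Suc \<in> factorizations (fact_word (k \<circ> Suc) m)"
    using m(1) unfolding factorizations_def by (auto intro!: exI[of _ m])
  moreover have "fact_word k (Suc m) = w"
    using m by (simp add: fact_word_def)
  ultimately show "\<exists>u. k \<circ> Suc \<in> factorizations u \<and> w = fib_morph u @ replicate (k 0) a"
    by (auto simp: fact_word_Suc)
next
  assume "\<exists>u. k \<circ> Suc \<in> factorizations u \<and> w = fib_morph u @ replicate (k 0) a"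
  then obtain u m where m: "\<forall>i\<ge>m. k (Suc i) = 0" "fact_word (k \<circ> Suc) m = u"
      "w = fib_morph u @ replicate (k 0) a"
    by (auto simp: factorizations_def)
  have "\<forall>i\<ge>Suc m. k i = 0"
    using m(1) by (metis Suc_le_D Suc_le_mono)
  moreover have "fact_word k (Suc m) = w"
    using m(2,3) by (simp add: fact_word_Suc)
  ultimately show "k \<in> factorizations w"
    by (auto simp: factorizations_def)
qed

lemma factorizations_bound: "k \<in> factorizations w \<Longrightarrow> k i * Suc i \<le> length w"
proof -
  assume "k \<in> factorizations w"
  then obtain m where m: "\<forall>i\<ge>m. k i = 0" "fact_word k m = w"
    by (auto simp: factorizations_def)
  show ?thesis
  proof (cases "i < m")
    case True
    have "k i * Suc i \<le> k i * length (fw i)"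
      using length_fw_gt[of i] by (intro mult_le_mono2) simp
    also have "\<dots> \<le> (\<Sum>i<m. k i * length (fw i))"
      using True by (intro member_le_sum) auto
    finally show ?thesis
      using m(2) length_fact_word[of k m] by simp
  qed (use m in auto)
qed

lemma finite_factorizations: "finite (factorizations w)"
proof (rule finite_subset)
  let ?n = "length w"
  show "factorizations w \<subseteq>
      {k. \<forall>i. (i \<in> {..<?n} \<longrightarrow> k i \<in> {..?n}) \<and> (i \<notin> {..<?n} \<longrightarrow> k i = 0)}"
  proof (intro subsetI CollectI allI conjI impI)
    fix k i assume "k \<in> factorizations w"
    then have bound: "k i * Suc i \<le> ?n"
      by (rule factorizations_bound)
    then show "k i \<in> {..?n}"
      by (simp add: order_trans[OF _ bound])
    show "k i = 0" if "i \<notin> {..<?n}"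
      using bound that by (cases "k i") auto
  qed
qed (intro finite_set_of_finite_funs; simp)

lemma factorizations_head_zero:
  "{k \<in> factorizations (fib_morph u). k 0 = 0} = case_nat 0 ` factorizations u"
proof (intro equalityI subsetI)
  fix k assume "k \<in> {k \<in> factorizations (fib_morph u). k 0 = 0}"
  then obtain v where "k \<circ> Suc \<in> factorizations v" "fib_morph u = fib_morph v" "k 0 = 0"
    by (auto simp: factorizations_iff[of k])
  moreover have "k = case_nat 0 (k \<circ> Suc)" if "k 0 = 0"
    using that by (auto simp: fun_eq_iff split: nat.split)
  ultimately show "k \<in> case_nat 0 ` factorizations u"
    using inj_fib_morph by (metis image_eqI injD)
next
  fix k assume "k \<in> case_nat 0 ` factorizations u"
  then obtain h where h: "h \<in> factorizations u" and k: "k = case_nat 0 h"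
    by blast
  have "k \<circ> Suc = h" "k 0 = 0"
    by (auto simp: k fun_eq_iff)
  then show "k \<in> {k \<in> factorizations (fib_morph u). k 0 = 0}"
    using h by (auto simp: factorizations_iff[of k])
qed

lemma factorizations_head_zero_not_morph:
  assumes "w \<notin> range fib_morph"
  shows "{k \<in> factorizations w. k 0 = 0} = {}"
proof -
  have "k 0 \<noteq> 0" if "k \<in> factorizations w" for k
    using that assms by (auto simp: factorizations_iff[of k])
  then show ?thesis
    by auto
qed

lemma factorizations_snoc_a_head_pos:
  "{k \<in> factorizations (w @ [a]). 0 < k 0} = (\<lambda>h. h(0 := Suc (h 0))) ` factorizations w"
proof (intro equalityI subsetI)
  fix k assume "k \<in> {k \<in> factorizations (w @ [a]). 0 < k 0}"
  then obtain v j where v: "k \<circ> Suc \<in> factorizations v"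
      "w @ [a] = fib_morph v @ replicate (Suc j) a" and j: "k 0 = Suc j"
    by (auto simp: factorizations_iff[of k] gr0_conv_Suc)
  define h where "h = k(0 := j)"
  have "h \<circ> Suc = k \<circ> Suc" "h 0 = j"
    by (auto simp: h_def fun_eq_iff)
  then have "h \<in> factorizations w"
    using v by (auto simp: factorizations_iff[of h] replicate_append_same[symmetric])
  moreover have "k = h(0 := Suc (h 0))"
    using j by (auto simp: h_def)
  ultimately show "k \<in> (\<lambda>h. h(0 := Suc (h 0))) ` factorizations w"
    by blast
next
  fix k assume "k \<in> (\<lambda>h. h(0 := Suc (h 0))) ` factorizations w"
  then obtain h where h: "h \<in> factorizations w" and k: "k = h(0 := Suc (h 0))"
    by blast
  have "k \<circ> Suc = h \<circ> Suc" "k 0 = Suc (h 0)"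
    by (auto simp: k fun_eq_iff)
  then show "k \<in> {k \<in> factorizations (w @ [a]). 0 < k 0}"
    using h by (auto simp: factorizations_iff[of k] factorizations_iff[of h]
        replicate_append_same[symmetric])
qed

lemma factorizations_snoc_b_head_pos: "{k \<in> factorizations (w @ [b]). 0 < k 0} = {}"
proof -
  have "k 0 = 0" if "k \<in> factorizations (w @ [b])" for k
    using that
    by (cases "k 0") (auto simp: factorizations_iff[of k] replicate_append_same[symmetric])
  then show ?thesis
    by auto
qed

lemma num_factorizations_split:
  "num_factorizations w =
    card {k \<in> factorizations w. k 0 = 0} + card {k \<in> factorizations w. 0 < k 0}"
proof -
  have "card (factorizations w) =
      card ({k \<in> factorizations w. k 0 = 0} \<union> {k \<in> factorizations w. 0 < k 0})"
    by (rule arg_cong[where f = card]) auto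
  also have "\<dots> =
      card {k \<in> factorizations w. k 0 = 0} + card {k \<in> factorizations w. 0 < k 0}"
    by (rule card_Un_disjoint) (auto intro: finite_subset[OF _ finite_factorizations])
  finally show ?thesis
    by (simp add: num_factorizations_def)
qed

lemma card_factorizations_head_zero:
  "card {k \<in> factorizations (fib_morph u). k 0 = 0} = num_factorizations u"
proof -
  have "inj (case_nat (0::nat))"
  proof (rule injI, rule ext)
    fix h h' :: "nat \<Rightarrow> nat" and i
    assume "case_nat 0 h = case_nat 0 h'"
    then show "h i = h' i"
      by (metis nat.case(2))
  qed
  then show ?thesis
    unfolding factorizations_head_zero num_factorizations_def
    by (auto intro: card_image inj_on_subset)
qed

lemma card_factorizations_snoc_a_head_pos:
  "card {k \<in> factorizations (w @ [a]). 0 < k 0} = num_factorizations w"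
proof -
  have "inj (\<lambda>h :: nat \<Rightarrow> nat. h(0 := Suc (h 0)))"
  proof (rule injI, rule ext)
    fix h h' :: "nat \<Rightarrow> nat" and i
    assume "h(0 := Suc (h 0)) = h'(0 := Suc (h' 0))"
    then show "h i = h' i"
      by (cases i) (metis fun_upd_same nat.inject, metis fun_upd_other nat.distinct(1))
  qed
  then show ?thesis
    unfolding factorizations_snoc_a_head_pos num_factorizations_def
    by (auto intro: card_image inj_on_subset)
qed

lemma num_factorizations_morph_snoc_a:
  "num_factorizations (fib_morph (w @ [a])) = num_factorizations (w @ [a])"
proof -
  have "fib_morph (w @ [a]) = (fib_morph w @ [a]) @ [b]"
    by simp
  then have "{k \<in> factorizations (fib_morph (w @ [a])). 0 < k 0} = {}"
    by (simp only: factorizations_snoc_b_head_pos)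
  then show ?thesis
    unfolding num_factorizations_split[of "fib_morph (w @ [a])"] card_factorizations_head_zero
    by (simp only: card.empty add_0_right)
qed

lemma num_factorizations_morph_snoc_b:
  "num_factorizations (fib_morph (w @ [b])) =
    num_factorizations (w @ [b]) + num_factorizations (fib_morph w)"
proof -
  have "fib_morph (w @ [b]) = fib_morph w @ [a]"
    by simp
  then have "card {k \<in> factorizations (fib_morph (w @ [b])). 0 < k 0} =
      num_factorizations (fib_morph w)"
    by (simp only: card_factorizations_snoc_a_head_pos)
  then show ?thesis
    unfolding num_factorizations_split[of "fib_morph (w @ [b])"] card_factorizations_head_zero
    by simp
qed

lemma num_factorizations_snoc_b_b: "num_factorizations (w @ [b, b]) = 0"
proof -
  have "{k \<in> factorizations (w @ [b, b]). k 0 = 0} = {}"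
    by (rule factorizations_head_zero_not_morph) (rule snoc_b_b_notin_range_fib_morph)
  moreover have "{k \<in> factorizations (w @ [b, b]). 0 < k 0} = {}"
    using factorizations_snoc_b_head_pos[of "w @ [b]"] by simp
  ultimately show ?thesis
    by (simp only: num_factorizations_split card.empty add_0)
qed

lemma num_factorizations_morph_morph_snoc_a_a:
  "num_factorizations (fib_morph (fib_morph w) @ [a, a]) =
    num_factorizations (fib_morph (fib_morph w) @ [a])"
proof -
  let ?u = "fib_morph w @ [b]"
  have "num_factorizations (fib_morph (?u @ [b])) =
      num_factorizations (?u @ [b]) + num_factorizations (fib_morph ?u)"
    by (rule num_factorizations_morph_snoc_b)
  then show ?thesis
    by (simp add: num_factorizations_snoc_b_b)
qed

definition digit_exps :: "nat list \<Rightarrow> nat \<Rightarrow> nat" where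
  "digit_exps ds i = (if i < length ds then rev ds ! i else 0)"

definition digit_word :: "nat list \<Rightarrow> letter list" where
  "digit_word ds = fact_word (digit_exps ds) (length ds)"

lemma digit_word_Nil [simp]: "digit_word [] = []"
  by (simp add: digit_word_def fact_word_def)

lemma digit_word_snoc [simp]:
  "digit_word (ds @ [c]) = fib_morph (digit_word ds) @ replicate c a"
proof -
  have "digit_exps (ds @ [c]) \<circ> Suc = digit_exps ds" "digit_exps (ds @ [c]) 0 = c"
    by (auto simp: digit_exps_def fun_eq_iff nth_append)
  then show ?thesis
    by (simp add: digit_word_def fact_word_Suc)
qed

lemma length_digit_word: "length (digit_word ds) = fibval ds"
  by (simp add: digit_word_def length_fact_word length_fw fibval_def digit_exps_def)

lemma prefix_fw_Suc_Suc:
  "prefix u (fw m) \<Longrightarrow> prefix (fib_morph u @ [a]) (fw (Suc (Suc m)))"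
proof -
  assume "prefix u (fw m)"
  then obtain r where r: "fw m = u @ r"
    by (auto simp: prefix_def)
  obtain t where t: "fw m = a # t"
    using fw_Cons_a by blast
  obtain t' where t': "fib_morph r @ a # t = a # t'"
    using fib_morph_append_Cons_a by blast
  have "fw (Suc (Suc m)) = fib_morph (fw m) @ fw m"
    by (simp only: fw.simps(3) fw_Suc[of m])
  also have "\<dots> = (fib_morph u @ [a]) @ t'"
    using r t t' by (metis append.assoc append_Cons append_Nil fib_morph_append)
  finally show ?thesis
    by (simp add: prefix_def)
qed

lemma digit_word_prefix_fw:
  "set ds \<subseteq> {0, 1} \<Longrightarrow> \<exists>m. prefix (digit_word ds) (fw m)"
proof (induction ds rule: rev_induct)
  case (snoc c ds)
  then obtain n where n: "prefix (fib_morph (digit_word ds) @ [a]) (fw n)"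
    using prefix_fw_Suc_Suc by fastforce
  have "prefix (digit_word (ds @ [c])) (fib_morph (digit_word ds) @ [a])"
    using snoc.prems by (auto simp: prefix_def)
  then show ?case
    using n prefix_order.trans by blast
qed auto

lemma V_fibval:
  "set ds \<subseteq> {0, 1} \<Longrightarrow> V (fibval ds) = num_factorizations (digit_word ds)"
  using digit_word_prefix_fw fib_prefix_eq
  by (metis length_digit_word V_eq_num_factorizations)

lemma digit_word_append_zero_one:
  "digit_word (ds @ [0, 1]) = fib_morph (fib_morph (digit_word ds)) @ [a]"
  using digit_word_snoc[of "ds @ [0]" 1] by simp

lemma digit_word_one_zeros_even:
  "digit_word (ds @ [1] @ replicate (2 * m) 0) =
    fib_morph (digit_word (ds @ concat (replicate m [0, 1]))) @ [a]"
proof (induction m)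
  case 0
  show ?case
    using digit_word_snoc[of ds 1] by simp
next
  case (Suc m)
  have "ds @ [1] @ replicate (2 * Suc m) 0 = ((ds @ [1] @ replicate (2 * m) 0) @ [0]) @ [0]"
    by (simp add: replicate_append_same)
  moreover have "ds @ concat (replicate (Suc m) [0, 1]) =
      (ds @ concat (replicate m [0, 1])) @ [0, 1]"
    by (simp add: replicate_append_same[symmetric])
  ultimately show ?case
    using Suc.IH by (simp only: digit_word_snoc digit_word_append_zero_one) simp
qed

lemma num_factorizations_digit_word_odd:
  "num_factorizations (digit_word (ds @ [1] @ replicate (2 * m + 1) 0 @ [1])) =
    num_factorizations (digit_word (ds @ [1] @ replicate (2 * m + 2) 0))"
proof -
  define R where "R = digit_word (ds @ concat (replicate m [0, 1]))"
  define X where "X = digit_word (ds @ [1] @ replicate (2 * m + 1) 0)"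
  have X: "X = fib_morph (fib_morph R) @ [a, b]"
    using digit_word_snoc[of "ds @ [1] @ replicate (2 * m) 0" 0]
      digit_word_one_zeros_even[of ds m]
    by (simp add: X_def R_def replicate_append_same)
  have "digit_word (ds @ [1] @ replicate (2 * m + 1) 0 @ [1]) = fib_morph (X @ [b])"
    using digit_word_snoc[of "ds @ [1] @ replicate (2 * m + 1) 0" 1] by (simp add: X_def)
  moreover have "digit_word (ds @ [1] @ replicate (2 * m + 2) 0) = fib_morph X"
    using digit_word_snoc[of "ds @ [1] @ replicate (2 * m + 1) 0" 0]
    by (simp add: X_def replicate_append_same numeral_2_eq_2)
  moreover have "num_factorizations (X @ [b]) = 0"
    using num_factorizations_snoc_b_b[of "fib_morph (fib_morph R) @ [a]"] by (simp add: X)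
  ultimately show ?thesis
    by (simp only: num_factorizations_morph_snoc_b add_0)
qed

lemma num_factorizations_digit_word_even:
  assumes "0 < m"
  shows "num_factorizations (digit_word (ds @ [1] @ replicate (2 * m) 0 @ [1])) =
    num_factorizations (digit_word (ds @ [1] @ replicate (2 * m) 0)) +
    num_factorizations (digit_word (ds @ concat (replicate m [0, 1])))"
proof -
  define R where "R = digit_word (ds @ concat (replicate m [0, 1]))"
  define X where "X = digit_word (ds @ [1] @ replicate (2 * m) 0)"
  have X: "X = fib_morph R @ [a]"
    using digit_word_one_zeros_even[of ds m] by (simp add: X_def R_def)
  obtain m' where "m = Suc m'"
    using assms gr0_conv_Suc by blast
  then have R:
      "R = fib_morph (fib_morph (digit_word (ds @ concat (replicate m' [0, 1])))) @ [a]"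
    using digit_word_append_zero_one[of "ds @ concat (replicate m' [0, 1])"]
    by (simp add: R_def replicate_append_same[symmetric])
  have "num_factorizations (X @ [b]) = num_factorizations R"
    using num_factorizations_morph_snoc_a[of R] num_factorizations_morph_morph_snoc_a_a
    by (simp add: X R)
  moreover have "num_factorizations (fib_morph X) = num_factorizations X"
    using num_factorizations_morph_snoc_a[of "fib_morph R"] by (simp add: X)
  moreover have "digit_word (ds @ [1] @ replicate (2 * m) 0 @ [1]) = fib_morph (X @ [b])"
    using digit_word_snoc[of "ds @ [1] @ replicate (2 * m) 0" 1] by (simp add: X_def)
  ultimately show ?thesis
    by (simp only: num_factorizations_morph_snoc_b R_def X_def add.commute)
qed

theorem proposition4:
  fixes z :: "nat list" and k :: nat
  assumes "set z \<subseteq> {0, 1}" and "k \<ge> 1"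
  shows "V (fibval (z @ [1] @ replicate k 0 @ [1])) =
    (if odd k then V (fibval (z @ [1] @ replicate (k + 1) 0))
     else V (fibval (z @ [1] @ replicate k 0)) + V (fibval (z @ concat (replicate (k div 2) [0, 1]))))"
proof -
  have V: "V (fibval (z @ ds)) = num_factorizations (digit_word (z @ ds))"
    if "set ds \<subseteq> {0, 1}" for ds
    using assms(1) that by (intro V_fibval) auto
  show ?thesis
  proof (cases "odd k")
    case True
    then obtain m where "k = 2 * m + 1"
      by (rule oddE)
    then show ?thesis
      using num_factorizations_digit_word_odd[of z m] by (simp add: V set_replicate_conv_if)
  next
    case False
    then obtain m where "k = 2 * m"
      by (auto elim: evenE)
    moreover have "0 < m"
      using assms(2) \<open>k = 2 * m\<close> by simp
    ultimately show ?thesis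
      using num_factorizations_digit_word_even[of m z] by (simp add: V set_replicate_conv_if)
  qed
qed

end
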